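(* Let $p>0$, $\alpha>0$ and let $f$ be a measurable, non-negative, non-increasing function on $(0,\infty)$. If $p\ge1$, then $$\int_0^\infty\Big(\int_x^\infty f(y)dy\Big)^p x^{\alpha}\frac{dx}{x}\ge p\,B(p,\alpha)\int_0^\infty (xf(x))^p x^{\alpha}\frac{dx}{x},$$ and if $0<p\le1$ the inequality holds in the reversed direction. In both cases the constant $p\,B(p,\alpha)$ is sharp.
   Context: $B(u,v)=\int_0^1 t^{u-1}(1-t)^{v-1}dt$ is the Euler beta function. *)

theory Defs
  imports "HOL-Analysis.Analysis"
begin

definition ennpow :: "ennreal \<Rightarrow> real \<Rightarrow> ennreal" where
  "ennpow x p = (if x = \<infinity> then \<infinity> else ennreal (enn2real x powr p))"

definition hardy_lhs :: "(real \<Rightarrow> real) \<Rightarrow> real \<Rightarrow> real \<Rightarrow> ennreal" where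
  "hardy_lhs f p \<alpha> =
     (\<integral>\<^sup>+ x \<in> {0<..}. ennpow (\<integral>\<^sup>+ y \<in> {x<..}. ennreal (f y) \<partial>lborel) p
                      * ennreal (x powr \<alpha> / x) \<partial>lborel)"

definition hardy_rhs :: "(real \<Rightarrow> real) \<Rightarrow> real \<Rightarrow> real \<Rightarrow> ennreal" where
  "hardy_rhs f p \<alpha> =
     (\<integral>\<^sup>+ x \<in> {0<..}. ennreal ((x * f x) powr p * (x powr \<alpha> / x)) \<partial>lborel)"

definition admissible :: "(real \<Rightarrow> real) \<Rightarrow> bool" where
  "admissible f \<longleftrightarrow> set_borel_measurable lborel {0<..} f
     \<and> (\<forall>x>0. 0 \<le> f x) \<and> (\<forall>x y. 0 < x \<longrightarrow> x \<le> y \<longrightarrow> f y \<le> f x)"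

end

theory Submission
  imports Defs
begin

(* Fix x > 0 and put F(s) = \<integral> f over [x, s]. As f is non-increasing, F(s) \<ge> (s - x) f(s),
   so the derivative p F(s)^(p-1) f(s) of F(s)^p dominates p ((s - x) f(s))^(p-1) f(s) if p \<ge> 1
   and is dominated by it if p \<le> 1. Integrating in s, with a mean value inequality that tolerates
   the countably many discontinuities of f, gives
     (\<integral> f over (x, \<infinity>))^p \<ge> \<integral> p (y - x)^(p-1) f(y)^p dy over (x, \<infinity>)   (reversed for p \<le> 1).
   Integrating against x^\<alpha> dx/x and exchanging the order of integration, the inner integral
   \<integral> p (y - x)^(p-1) x^(\<alpha>-1) dx over (0, y) = p B(p, \<alpha>) y^(p+\<alpha>-1) yields the right-hand side.
   For the indicator of (0, 1] the pointwise bound is an equality, which gives sharpness. *)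

lemma le_if_pos_deriv_countable:
  fixes g :: "real \<Rightarrow> real"
  assumes ab: "a \<le> b" and cont: "continuous_on {a..b} g" and D: "countable D"
    and der: "\<And>t. t \<in> {a<..<b} - D \<Longrightarrow> \<exists>d>0. (g has_real_derivative d) (at t)"
  shows "g a \<le> g b"
proof (rule ccontr)
  assume "\<not> g a \<le> g b"
  hence gba: "g b < g a" by simp
  \<comment> \<open>A level y avoided by g on D is crossed downwards at its last passage c, where g' > 0 is impossible.\<close>
  have "uncountable {g b<..<g a}" using gba by (simp add: uncountable_open_interval)
  moreover have "countable (g ` D)" using D by simp
  ultimately obtain y where y: "y \<in> {g b<..<g a}" "y \<notin> g ` D"
    by (metis countable_subset subsetI)
  define S where "S = {t\<in>{a..b}. y \<le> g t}"
  have S_ne: "S \<noteq> {}" using y ab by (auto simp: S_def)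
  have S_bdd: "bdd_above S" by (auto simp: S_def bdd_above_def)
  have "S = {a..b} \<inter> g -` {y..}" by (auto simp: S_def)
  moreover have "closed ({a..b} \<inter> g -` {y..})"
    by (rule continuous_closed_preimage[OF cont]) auto
  ultimately have S_closed: "closed S" by simp
  define c where "c = Sup S"
  have cS: "c \<in> S" unfolding c_def by (rule closed_contains_Sup[OF S_ne S_bdd S_closed])
  have below: "g t < y" if "t \<in> {a..b}" "t > c" for t
  proof (rule ccontr)
    assume "\<not> g t < y"
    hence "t \<le> c" using that unfolding c_def by (intro cSup_upper[OF _ S_bdd]) (auto simp: S_def)
    with that show False by simp
  qed
  have cb: "c < b" using cS y(1) by (auto simp: S_def less_le)
  have gc: "g c = y"
  proof (rule ccontr)
    assume "g c \<noteq> y"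
    hence gt: "g c > y" using cS by (auto simp: S_def)
    have c_ab: "c \<in> {a..b}" using cS by (auto simp: S_def)
    then obtain d where d: "d > 0" "\<And>t. t \<in> {a..b} \<Longrightarrow> dist t c < d \<Longrightarrow> dist (g t) (g c) < g c - y"
      using cont gt unfolding continuous_on_iff by (metis diff_gt_0_iff_gt)
    define t where "t = min b (c + d/2)"
    have t: "t \<in> {a..b}" "t > c" "dist t c < d" using cb d c_ab
      by (auto simp: t_def dist_real_def)
    show False using below[OF t(1,2)] d(2)[OF t(1,3)] by (simp add: dist_real_def)
  qed
  have "c \<in> {a<..<b} - D" using cS cb gc y by (auto simp: S_def)
  then obtain d where "d > 0" "(g has_real_derivative d) (at c)" using der by blast
  then obtain r where r: "r > 0" "\<And>k. k > 0 \<Longrightarrow> k < r \<Longrightarrow> g c < g (c + k)"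
    using DERIV_pos_inc_right by blast
  define k where "k = min (r/2) (b - c)"
  have k: "k > 0" "k < r" "c + k \<in> {a..b}" using r cb cS by (auto simp: k_def S_def)
  show False using r(2)[OF k(1,2)] below[OF k(3)] gc k(1) by auto
qed

lemma le_if_nonneg_deriv_countable:
  fixes h :: "real \<Rightarrow> real"
  assumes ab: "a \<le> b" and cont: "continuous_on {a..b} h" and D: "countable D"
    and der: "\<And>t. t \<in> {a<..<b} - D \<Longrightarrow> \<exists>d\<ge>0. (h has_real_derivative d) (at t)"
  shows "h a \<le> h b"
proof (rule field_le_epsilon)
  fix e :: real assume e: "e > 0"
  define c where "c = e / (b - a + 1)"
  have c: "c > 0" "c * (b - a) \<le> e" using e ab by (auto simp: c_def field_simps)
  have "h a + c * (a - a) \<le> h b + c * (b - a)"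
  proof (rule le_if_pos_deriv_countable[OF ab _ D, where g = "\<lambda>t. h t + c * (t - a)"])
    show "continuous_on {a..b} (\<lambda>t. h t + c * (t - a))" by (intro continuous_intros cont)
    fix t assume "t \<in> {a<..<b} - D"
    then obtain d where "d \<ge> 0" "(h has_real_derivative d) (at t)" using der by blast
    hence "((\<lambda>t. h t + c * (t - a)) has_real_derivative d + c) (at t)" "d + c > 0"
      using c by (auto intro!: derivative_eq_intros)
    thus "\<exists>d>0. ((\<lambda>t. h t + c * (t - a)) has_real_derivative d) (at t)" by blast
  qed
  thus "h a \<le> h b + e" using c by simp
qed

lemma diff_le_diff_if_deriv_le_countable:
  fixes g h :: "real \<Rightarrow> real"
  assumes "a \<le> b" "continuous_on {a..b} g" "continuous_on {a..b} h" "countable D"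
    and "\<And>t. t \<in> {a<..<b} - D \<Longrightarrow> (g has_real_derivative g' t) (at t)"
    and "\<And>t. t \<in> {a<..<b} - D \<Longrightarrow> (h has_real_derivative h' t) (at t)"
    and "\<And>t. t \<in> {a<..<b} - D \<Longrightarrow> g' t \<le> h' t"
  shows "g b - g a \<le> h b - h a"
proof -
  have "h a - g a \<le> h b - g b"
  proof (rule le_if_nonneg_deriv_countable[OF assms(1) _ assms(4)])
    show "continuous_on {a..b} (\<lambda>t. h t - g t)" using assms(2,3) by (rule continuous_on_diff[rotated])
    fix t assume t: "t \<in> {a<..<b} - D"
    have "((\<lambda>t. h t - g t) has_real_derivative h' t - g' t) (at t)"
      using assms(5,6)[OF t] by (rule DERIV_diff[rotated])
    thus "\<exists>d\<ge>0. ((\<lambda>t. h t - g t) has_real_derivative d) (at t)" using assms(7)[OF t] by (intro exI[of _ "h' t - g' t"]) auto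
  qed
  thus ?thesis by simp
qed

lemma nn_integral_Ioi_eq_SUP_Ioo:
  fixes h :: "real \<Rightarrow> ennreal"
  assumes meas: "(\<lambda>y. h y * indicator {x<..} y) \<in> borel_measurable lborel"
  shows "(\<integral>\<^sup>+ y\<in>{x<..}. h y \<partial>lborel) = (SUP n. \<integral>\<^sup>+ y\<in>{x<..<x + real n}. h y \<partial>lborel)"
proof -
  have "h y * indicator {x<..} y = (SUP n. h y * indicator {x<..<x + real n} y)" for y
  proof (rule antisym)
    obtain N :: nat where "y - x < real N" using reals_Archimedean2 by blast
    hence "h y * indicator {x<..} y = h y * indicator {x<..<x + real N} y"
      by (simp add: indicator_def)
    also have "\<dots> \<le> (SUP n. h y * indicator {x<..<x + real n} y)" by (rule SUP_upper) simp
    finally show "h y * indicator {x<..} y \<le> (SUP n. h y * indicator {x<..<x + real n} y)" .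
    show "(SUP n. h y * indicator {x<..<x + real n} y) \<le> h y * indicator {x<..} y"
      by (rule SUP_least) (auto simp: indicator_def)
  qed
  hence "(\<integral>\<^sup>+ y\<in>{x<..}. h y \<partial>lborel) = (\<integral>\<^sup>+ y. (SUP n. h y * indicator {x<..<x + real n} y) \<partial>lborel)"
    by simp
  also have "\<dots> = (SUP n. \<integral>\<^sup>+ y\<in>{x<..<x + real n}. h y \<partial>lborel)"
  proof (rule nn_integral_monotone_convergence_SUP)
    show "incseq (\<lambda>n y. h y * indicator {x<..<x + real n} y)"
      by (auto simp: incseq_def le_fun_def indicator_def)
    have "(\<lambda>y. h y * indicator {x<..<x + real n} y)
        = (\<lambda>y. h y * indicator {x<..} y * indicator {..<x + real n} y)" for n
      by (auto simp: indicator_def)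
    thus "(\<lambda>y. h y * indicator {x<..<x + real n} y) \<in> borel_measurable lborel" for n
      using meas by simp
  qed
  finally show ?thesis .
qed

lemma ennreal_powr_le_ennpow:
  assumes "0 \<le> a" "ennreal a \<le> T" "p \<ge> 0"
  shows "ennreal (a powr p) \<le> ennpow T p"
proof (cases "T = \<infinity>")
  case False
  hence "enn2real (ennreal a) \<le> enn2real T" using assms by (intro enn2real_mono) (auto simp: less_top)
  thus ?thesis using assms False by (auto simp: ennpow_def intro!: ennreal_leI powr_mono2)
qed (simp add: ennpow_def)

lemma ennpow_SUP_le:
  fixes a :: "nat \<Rightarrow> real"
  assumes p: "p > 0" and a: "\<And>n. 0 \<le> a n" and bound: "\<And>n. ennreal (a n powr p) \<le> B"
  shows "ennpow (SUP n. ennreal (a n)) p \<le> B"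
proof (cases B)
  case (real r)
  have "a n \<le> r powr (1/p)" for n
  proof -
    have "a n powr p \<le> r" using bound[of n] real by (simp add: ennreal_le_iff)
    hence "(a n powr p) powr (1/p) \<le> r powr (1/p)" using p by (intro powr_mono2) auto
    thus ?thesis using a[of n] p by (simp add: powr_powr)
  qed
  hence "(SUP n. ennreal (a n)) \<le> ennreal (r powr (1/p))" by (intro SUP_least ennreal_leI)
  then obtain s where s: "(SUP n. ennreal (a n)) = ennreal s" "0 \<le> s" "s \<le> r powr (1/p)"
    by (cases "SUP n. ennreal (a n)") (auto simp: ennreal_le_iff top_unique)
  hence "s powr p \<le> (r powr (1/p)) powr p" using p by (intro powr_mono2) auto
  also have "\<dots> = r" using real p by (simp add: powr_powr)
  finally show ?thesis using s real by (simp add: ennpow_def ennreal_leI)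
qed simp

lemma has_integral_powr_shifted:
  fixes p x s :: real
  assumes p: "p > 0" and sx: "x \<le> s"
  shows "((\<lambda>t. p * (t - x) powr (p - 1)) has_integral (s - x) powr p) {x..s}"
proof -
  have "((\<lambda>t. p * (t - x) powr (p - 1)) has_integral ((s - x) powr p - (x - x) powr p)) {x..s}"
  proof (rule fundamental_theorem_of_calculus_interior[OF sx])
    show "continuous_on {x..s} (\<lambda>t. (t - x) powr p)"
      using p by (intro continuous_on_powr' continuous_intros) auto
    fix t assume "t \<in> {x<..<s}"
    thus "((\<lambda>t. (t - x) powr p) has_vector_derivative p * (t - x) powr (p - 1)) (at t)"
      unfolding has_real_derivative_iff_has_vector_derivative[symmetric]
      by (auto intro!: derivative_eq_intros)
  qed
  thus ?thesis by simp
qed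

definition power_tail :: "(real \<Rightarrow> real) \<Rightarrow> real \<Rightarrow> real \<Rightarrow> ennreal" where
  "power_tail f p x = (\<integral>\<^sup>+ y\<in>{x<..}. ennreal (p * (y - x) powr (p - 1) * f y powr p) \<partial>lborel)"

locale antimono_from =
  fixes f :: "real \<Rightarrow> real" and x p :: real
  assumes p_pos: "p > 0"
    and nonneg: "\<And>t. t \<ge> x \<Longrightarrow> 0 \<le> f t"
    and antimono: "\<And>t u. x \<le> t \<Longrightarrow> t \<le> u \<Longrightarrow> f u \<le> f t"
begin

definition w where "w t = p * (t - x) powr (p - 1) * f t powr p"
definition F where "F s = integral {x..s} f"
definition W where "W s = integral {x..s} w"

lemma mono_on_uminus: "mono_on {x..s} (\<lambda>t. - f t)"
  by (auto simp: mono_on_def intro: antimono)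

lemma integrable_f: "f integrable_on {x..s}"
  using integrable_neg[OF integrable_on_mono_on[OF mono_on_uminus]] by simp

lemma borel_measurable_powr: "(\<lambda>t. f t powr p) \<in> borel_measurable (lebesgue_on {x..s})"
proof -
  have "mono_on {x..s} (\<lambda>t. - (f t powr p))"
    using nonneg antimono p_pos by (auto simp: mono_on_def intro!: powr_mono2)
  hence "(\<lambda>t. - (f t powr p)) \<in> borel_measurable (lebesgue_on {x..s})"
    by (metis borel_measurable_mono_on_fnc borel_measurable_subalgebra mono_restrict_space
        sets_lborel space_lborel space_restrict_space sets_completionI_sets subsetI space_completion)
  from borel_measurable_uminus[OF this] show ?thesis by simp
qed

lemma integrable_w: "w integrable_on {x..s}"
proof (cases "x \<le> s")
  case False
  thus ?thesis by (simp add: integrable_on_empty)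
next
  case True
  have "(\<lambda>t. p * (t - x) powr (p - 1)) absolutely_integrable_on {x..s}"
    using has_integral_powr_shifted[OF p_pos True] p_pos
    by (intro nonnegative_absolutely_integrable_1) (auto simp: has_integral_integrable)
  moreover have "bounded ((\<lambda>t. f t powr p) ` {x..s})"
  proof -
    have "\<forall>t\<in>{x..s}. norm (f t powr p) \<le> f x powr p"
      using nonneg antimono p_pos by (auto intro!: powr_mono2)
    thus ?thesis by (auto simp: bounded_iff)
  qed
  ultimately have "(\<lambda>t. f t powr p * (p * (t - x) powr (p - 1))) absolutely_integrable_on {x..s}"
    by (intro absolutely_integrable_bounded_measurable_product_real[OF borel_measurable_powr]) auto
  thus ?thesis
    by (simp add: absolutely_integrable_on_def w_def[abs_def] mult_ac)
qed

lemma w_nonneg: "t \<ge> x \<Longrightarrow> w t \<ge> 0"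
  using p_pos nonneg by (simp add: w_def)

lemma F_nonneg: "s \<ge> x \<Longrightarrow> F s \<ge> 0"
  unfolding F_def by (rule integral_nonneg[OF integrable_f]) (auto intro: nonneg)

lemma W_nonneg: "s \<ge> x \<Longrightarrow> W s \<ge> 0"
  unfolding W_def by (rule integral_nonneg[OF integrable_w]) (auto intro: w_nonneg)

lemma F_ge: "t \<ge> x \<Longrightarrow> (t - x) * f t \<le> F t"
proof -
  assume "t \<ge> x"
  moreover have "integral {x..t} (\<lambda>_. f t) \<le> integral {x..t} f"
    by (rule integral_le[OF _ integrable_f]) (auto intro: antimono)
  ultimately show ?thesis by (simp add: F_def)
qed

lemma continuous_on_F: "continuous_on {x..s} F"
  unfolding F_def[abs_def] by (rule indefinite_integral_continuous_1[OF integrable_f])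

lemma continuous_on_W: "continuous_on {x..s} W"
  unfolding W_def[abs_def] by (rule indefinite_integral_continuous_1[OF integrable_w])

definition jumps where "jumps s = {t\<in>{x..s}. \<not> continuous (at t within {x..s}) (\<lambda>t. - f t)}"

lemma countable_jumps: "countable (jumps s)"
  unfolding jumps_def by (rule mono_on_ctble_discont[OF mono_on_uminus])

lemma
  assumes t: "t \<in> {x<..<s} - jumps s"
  shows has_real_derivative_F: "(F has_real_derivative f t) (at t)"
    and has_real_derivative_W: "(W has_real_derivative w t) (at t)"
proof -
  have tx: "x < t" "t < s" using t by auto
  have "continuous (at t) (\<lambda>t. - f t)"
    using t at_within_Icc_at[OF tx] by (auto simp: jumps_def)
  hence cont_f: "continuous (at t) f" using continuous_minus[of "at t" "\<lambda>t. - f t"] by simp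
  have right: "eventually (\<lambda>u. u > x) (at t)"
    using order_tendstoD(1)[OF tendsto_ident_at tx(1)] by simp
  have "((\<lambda>u. f u powr p) \<longlongrightarrow> f t powr p) (at t)"
    by (rule tendsto_powr')
      (use cont_f p_pos right in \<open>auto simp: isCont_def elim!: eventually_mono intro: nonneg\<close>)
  hence "continuous (at t) (\<lambda>u. f u powr p)" by (simp add: isCont_def)
  moreover have "continuous (at t) (\<lambda>u. p * (u - x) powr (p - 1))"
    using tx by (intro continuous_intros continuous_at_within_powr) auto
  ultimately have cont_w: "continuous (at t) w"
    using continuous_mult by (fastforce simp: w_def[abs_def])
  have deriv: "((\<lambda>u. integral {x..u} g) has_real_derivative g t) (at t)"
    if "g integrable_on {x..s}" "continuous (at t) g" for g
    using integral_has_vector_derivative_continuous_at[OF that(1), of t "{}"] that(2) tx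
      at_within_Icc_at[OF tx]
    by (auto simp: has_real_derivative_iff_has_vector_derivative
        intro: continuous_at_imp_continuous_at_within)
  show "(F has_real_derivative f t) (at t)"
    unfolding F_def[abs_def] by (rule deriv[OF integrable_f cont_f])
  show "(W has_real_derivative w t) (at t)"
    unfolding W_def[abs_def] by (rule deriv[OF integrable_w cont_w])
qed

lemma F_base: "F x = 0" by (simp add: F_def)
lemma W_base: "W x = 0" by (simp add: W_def)

lemma w_eq: "t > x \<Longrightarrow> w t = p * ((t - x) * f t) powr (p - 1) * f t"
proof (cases "f t = 0")
  case False
  assume "t > x"
  hence "f t > 0" using nonneg[of t] False by simp
  hence "f t powr p = f t powr (p - 1) * f t" using powr_add[of "f t" "p - 1" 1] by simp
  thus ?thesis using \<open>t > x\<close> \<open>f t > 0\<close> by (simp add: w_def powr_mult mult_ac)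
qed (use p_pos in \<open>simp add: w_def\<close>)

text \<open>The perturbation e keeps the base of the power (F t + e) powr (p - 1) away from 0.\<close>

lemma continuous_on_F_plus_powr: "e > 0 \<Longrightarrow> continuous_on {x..s} (\<lambda>t. (F t + e) powr p)"
  using F_nonneg by (intro continuous_on_powr' continuous_intros continuous_on_F) (auto, fastforce)

lemma has_real_derivative_F_plus_powr:
  assumes e: "e > 0" and t: "t \<in> {x<..<s} - jumps s"
  shows "((\<lambda>t. (F t + e) powr p) has_real_derivative p * (F t + e) powr (p - 1) * f t) (at t)"
proof -
  have "((\<lambda>t. F t + e) has_real_derivative f t) (at t)" "F t + e > 0"
    using has_real_derivative_F[OF t] F_nonneg[of t] e t by (auto intro!: derivative_eq_intros)
  from DERIV_fun_powr[OF this, of p] show ?thesis by simp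
qed

lemma W_le_F_plus_powr:
  assumes p1: "p \<ge> 1" and sx: "x \<le> s" and e: "e > 0"
  shows "W s \<le> (F s + e) powr p - e powr p"
proof -
  have "W s - W x \<le> (F s + e) powr p - (F x + e) powr p"
  proof (rule diff_le_diff_if_deriv_le_countable[OF sx continuous_on_W
        continuous_on_F_plus_powr[OF e] countable_jumps])
    fix t assume t: "t \<in> {x<..<s} - jumps s"
    show "(W has_real_derivative w t) (at t)" by (rule has_real_derivative_W[OF t])
    show "((\<lambda>t. (F t + e) powr p) has_real_derivative p * (F t + e) powr (p - 1) * f t) (at t)"
      by (rule has_real_derivative_F_plus_powr[OF e t])
    have "((t - x) * f t) powr (p - 1) \<le> (F t + e) powr (p - 1)"
      using F_ge[of t] nonneg[of t] t e p1 by (intro powr_mono2) auto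
    thus "w t \<le> p * (F t + e) powr (p - 1) * f t"
      using w_eq[of t] nonneg[of t] t p_pos by (auto intro!: mult_right_mono mult_left_mono)
  qed
  thus ?thesis by (simp add: F_base W_base)
qed

lemma F_plus_powr_le_W:
  assumes p1: "p \<le> 1" and sx: "x \<le> s" and e: "e > 0"
  shows "(F s + e) powr p - e powr p \<le> W s"
proof -
  have "(F s + e) powr p - (F x + e) powr p \<le> W s - W x"
  proof (rule diff_le_diff_if_deriv_le_countable[OF sx continuous_on_F_plus_powr[OF e]
        continuous_on_W countable_jumps])
    fix t assume t: "t \<in> {x<..<s} - jumps s"
    show "(W has_real_derivative w t) (at t)" by (rule has_real_derivative_W[OF t])
    show "((\<lambda>t. (F t + e) powr p) has_real_derivative p * (F t + e) powr (p - 1) * f t) (at t)"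
      by (rule has_real_derivative_F_plus_powr[OF e t])
    show "p * (F t + e) powr (p - 1) * f t \<le> w t"
    proof (cases "f t = 0")
      case False
      hence "f t > 0" using nonneg[of t] t by force
      hence "(F t + e) powr (p - 1) \<le> ((t - x) * f t) powr (p - 1)"
        using F_ge[of t] t e p1 by (intro powr_mono2') auto
      thus ?thesis using w_eq[of t] \<open>f t > 0\<close> t p_pos by (auto intro!: mult_right_mono mult_left_mono)
    qed (simp add: w_def)
  qed
  thus ?thesis by (simp add: F_base W_base)
qed

lemma W_le_F_powr:
  assumes p1: "p \<ge> 1" and sx: "x \<le> s"
  shows "W s \<le> F s powr p"
proof -
  have "W s powr (1/p) \<le> F s"
  proof (rule field_le_epsilon)
    fix e :: real assume e: "e > 0"
    have "W s \<le> (F s + e) powr p" using W_le_F_plus_powr[OF p1 sx e] powr_ge_zero[of e p] by linarith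
    hence "W s powr (1/p) \<le> ((F s + e) powr p) powr (1/p)"
      using W_nonneg[OF sx] p_pos by (intro powr_mono2) auto
    also have "\<dots> = F s + e" using F_nonneg[OF sx] e p_pos by (simp add: powr_powr)
    finally show "W s powr (1/p) \<le> F s + e" .
  qed
  hence "(W s powr (1/p)) powr p \<le> F s powr p" using p_pos by (intro powr_mono2) auto
  thus ?thesis using W_nonneg[OF sx] p_pos by (simp add: powr_powr)
qed

lemma F_powr_le_W:
  assumes p1: "p \<le> 1" and sx: "x \<le> s"
  shows "F s powr p \<le> W s"
proof (rule field_le_epsilon)
  fix d :: real assume d: "d > 0"
  define e where "e = d powr (1/p)"
  have e: "e > 0" "e powr p = d" using d p_pos by (simp_all add: e_def powr_powr)
  have "F s powr p \<le> (F s + e) powr p" using F_nonneg[OF sx] e p_pos by (intro powr_mono2) auto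
  also have "\<dots> \<le> W s + e powr p" using F_plus_powr_le_W[OF p1 sx e(1)] by simp
  finally show "F s powr p \<le> W s + d" using e by simp
qed

lemma nn_integral_f_eq_F: "x \<le> s \<Longrightarrow> (\<integral>\<^sup>+ y\<in>{x<..<s}. ennreal (f y) \<partial>lborel) = ennreal (F s)"
  unfolding F_def
  by (rule nn_integral_has_integral_lebesgue')
     (use integrable_f in \<open>auto intro: nonneg simp: has_integral_Icc_iff_Ioo[symmetric]\<close>)

lemma nn_integral_w_eq_W: "x \<le> s \<Longrightarrow> (\<integral>\<^sup>+ y\<in>{x<..<s}. ennreal (w y) \<partial>lborel) = ennreal (W s)"
  unfolding W_def
  by (rule nn_integral_has_integral_lebesgue')
     (use integrable_w in \<open>auto intro: w_nonneg simp: has_integral_Icc_iff_Ioo[symmetric]\<close>)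

lemma
  assumes meas: "f \<in> borel_measurable lborel"
  shows nn_integral_Ioi_eq_SUP_F: "(\<integral>\<^sup>+ y\<in>{x<..}. ennreal (f y) \<partial>lborel) = (SUP n. ennreal (F (x + real n)))"
    and power_tail_eq_SUP_W: "power_tail f p x = (SUP n. ennreal (W (x + real n)))"
proof -
  show "(\<integral>\<^sup>+ y\<in>{x<..}. ennreal (f y) \<partial>lborel) = (SUP n. ennreal (F (x + real n)))"
    by (subst nn_integral_Ioi_eq_SUP_Ioo) (use meas nn_integral_f_eq_F in auto)
  have "power_tail f p x = (\<integral>\<^sup>+ y\<in>{x<..}. ennreal (w y) \<partial>lborel)"
    by (simp add: power_tail_def w_def)
  also have "\<dots> = (SUP n. ennreal (W (x + real n)))"
    by (subst nn_integral_Ioi_eq_SUP_Ioo) (use meas nn_integral_w_eq_W in \<open>auto simp: w_def\<close>)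
  finally show "power_tail f p x = (SUP n. ennreal (W (x + real n)))" .
qed

lemma power_tail_le_ennpow:
  assumes meas: "f \<in> borel_measurable lborel" and p1: "p \<ge> 1"
  shows "power_tail f p x \<le> ennpow (\<integral>\<^sup>+ y\<in>{x<..}. ennreal (f y) \<partial>lborel) p"
  unfolding power_tail_eq_SUP_W[OF meas]
proof (rule SUP_least)
  fix n
  have "ennreal (W (x + real n)) \<le> ennreal (F (x + real n) powr p)"
    using W_le_F_powr[OF p1] by (simp add: ennreal_leI)
  also have "\<dots> \<le> ennpow (\<integral>\<^sup>+ y\<in>{x<..}. ennreal (f y) \<partial>lborel) p"
    unfolding nn_integral_Ioi_eq_SUP_F[OF meas]
    using F_nonneg p_pos by (intro ennreal_powr_le_ennpow SUP_upper) auto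
  finally show "ennreal (W (x + real n)) \<le> ennpow (\<integral>\<^sup>+ y\<in>{x<..}. ennreal (f y) \<partial>lborel) p" .
qed

lemma ennpow_le_power_tail:
  assumes meas: "f \<in> borel_measurable lborel" and p1: "p \<le> 1"
  shows "ennpow (\<integral>\<^sup>+ y\<in>{x<..}. ennreal (f y) \<partial>lborel) p \<le> power_tail f p x"
  unfolding nn_integral_Ioi_eq_SUP_F[OF meas]
proof (rule ennpow_SUP_le[OF p_pos])
  fix n
  have "ennreal (F (x + real n) powr p) \<le> ennreal (W (x + real n))"
    using F_powr_le_W[OF p1] by (simp add: ennreal_leI)
  also have "\<dots> \<le> power_tail f p x"
    unfolding power_tail_eq_SUP_W[OF meas] by (rule SUP_upper) simp
  finally show "ennreal (F (x + real n) powr p) \<le> power_tail f p x" .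
qed (simp add: F_nonneg)

end

lemma has_integral_Beta_scaled:
  fixes y a b :: real
  assumes y: "y > 0" and a: "a > 0" and b: "b > 0"
  shows "((\<lambda>x. x powr (a - 1) * (y - x) powr (b - 1)) has_integral y powr (a + b - 1) * Beta a b) {0..y}"
proof -
  define g where "g t = t powr (a - 1) * (1 - t) powr (b - 1)" for t :: real
  have "(\<lambda>x. x / (1/y)) ` {0..1} = {0..y}"
    using y by (auto simp: image_iff intro!: bexI[of _ "_ / y"] mult_le_cancel_left1)
  with has_integral_stretch_real[of g "Beta a b" 0 1 "1/y"] have stretched:
    "((\<lambda>x. g (x / y)) has_integral y * Beta a b) {0..y}"
    using has_integral_Beta_real[OF a b] y by (simp add: g_def[abs_def])
  have "y powr (a + b - 2) * g (x / y) = x powr (a - 1) * (y - x) powr (b - 1)" if "x \<in> {0..y}" for x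
  proof -
    have "1 - x / y = (y - x) / y" using y by (simp add: field_simps)
    hence "g (x / y) = (x powr (a - 1) / y powr (a - 1)) * ((y - x) powr (b - 1) / y powr (b - 1))"
      using that y by (simp add: g_def powr_divide)
    moreover have "y powr (a + b - 2) = y powr (a - 1) * y powr (b - 1)"
      by (simp add: powr_add[symmetric])
    ultimately show ?thesis using y by (simp add: field_simps)
  qed
  moreover have "y powr (a + b - 2) * (y * Beta a b) = y powr (a + b - 1) * Beta a b"
    using powr_add[of y "a + b - 2" 1] y by simp
  ultimately show ?thesis
    using has_integral_mult_right[OF stretched, of "y powr (a + b - 2)"]
    by (metis (no_types, lifting) has_integral_eq)
qed

lemma nn_integral_Beta_kernel:
  fixes y p \<alpha> c :: real
  assumes y: "y > 0" and p: "p > 0" and a: "\<alpha> > 0" and c: "c \<ge> 0"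
  shows "(\<integral>\<^sup>+ x\<in>{0<..<y}. ennreal (p * (y - x) powr (p - 1) * x powr (\<alpha> - 1) * c powr p) \<partial>lborel)
    = ennreal (p * Beta p \<alpha>) * ennreal ((y * c) powr p * (y powr \<alpha> / y))"
proof -
  have B: "Beta p \<alpha> > 0" using p a by (simp add: Beta_def Gamma_real_pos)
  have "((\<lambda>x. p * (y - x) powr (p - 1) * x powr (\<alpha> - 1) * c powr p)
      has_integral p * Beta p \<alpha> * y powr (p + \<alpha> - 1) * c powr p) {0<..<y}"
    using has_integral_mult_right[OF has_integral_Beta_scaled[OF y a p], of "p * c powr p"]
    by (simp add: has_integral_Icc_iff_Ioo[symmetric] Beta_commute[of \<alpha> p] add.commute mult_ac)
  hence "(\<integral>\<^sup>+ x\<in>{0<..<y}. ennreal (p * (y - x) powr (p - 1) * x powr (\<alpha> - 1) * c powr p) \<partial>lborel)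
      = ennreal (p * Beta p \<alpha> * ((y * c) powr p * (y powr \<alpha> / y)))"
    by (subst nn_integral_has_integral_lebesgue')
       (use p y c in \<open>auto simp: powr_mult powr_diff powr_add mult_ac\<close>)
  also have "\<dots> = ennreal (p * Beta p \<alpha>) * ennreal ((y * c) powr p * (y powr \<alpha> / y))"
    by (rule ennreal_mult) (use p B y in auto)
  finally show ?thesis .
qed

lemma nn_integral_power_tail:
  fixes g :: "real \<Rightarrow> real" and p \<alpha> :: real
  assumes gm: "g \<in> borel_measurable lborel" and g0: "\<And>y. y > 0 \<Longrightarrow> g y \<ge> 0"
    and p: "p > 0" and a: "\<alpha> > 0"
  shows "(\<integral>\<^sup>+ x\<in>{0<..}. power_tail g p x * ennreal (x powr \<alpha> / x) \<partial>lborel)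
       = ennreal (p * Beta p \<alpha>) * hardy_rhs g p \<alpha>"
proof -
  define H where "H x y = ennreal (if 0 < x \<and> x < y
      then p * (y - x) powr (p - 1) * x powr (\<alpha> - 1) * g y powr p else 0)" for x y :: real
  have "case_prod H \<in> borel_measurable (lborel \<Otimes>\<^sub>M lborel)"
    unfolding H_def[abs_def] using gm by measurable
  note Tonelli = lborel_pair.Fubini'[OF this]
  have inner_y: "power_tail g p x * ennreal (x powr \<alpha> / x) * indicator {0<..} x = (\<integral>\<^sup>+ y. H x y \<partial>lborel)" for x
  proof -
    have "power_tail g p x * (ennreal (x powr \<alpha> / x) * indicator {0<..} x)
        = (\<integral>\<^sup>+ y. ennreal (p * (y - x) powr (p - 1) * g y powr p) * indicator {x<..} y
              * (ennreal (x powr \<alpha> / x) * indicator {0<..} x) \<partial>lborel)"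
      unfolding power_tail_def by (rule nn_integral_multc[symmetric]) (use gm in measurable)
    also have "\<dots> = (\<integral>\<^sup>+ y. H x y \<partial>lborel)"
    proof (rule nn_integral_cong)
      fix y
      show "ennreal (p * (y - x) powr (p - 1) * g y powr p) * indicator {x<..} y
              * (ennreal (x powr \<alpha> / x) * indicator {0<..} x) = H x y"
      proof (cases "0 < x \<and> x < y")
        case True
        hence "x powr \<alpha> / x = x powr (\<alpha> - 1)" by (simp add: powr_diff)
        thus ?thesis using True p g0[of y] by (simp add: H_def ennreal_mult'' mult_ac)
      qed (auto simp: H_def indicator_def)
    qed
    finally show ?thesis by (simp add: mult_ac)
  qed
  have inner_x: "(\<integral>\<^sup>+ x. H x y \<partial>lborel)
      = ennreal (p * Beta p \<alpha>) * (ennreal ((y * g y) powr p * (y powr \<alpha> / y)) * indicator {0<..} y)" for y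
  proof (cases "y > 0")
    case True
    have "(\<integral>\<^sup>+ x. H x y \<partial>lborel) = (\<integral>\<^sup>+ x\<in>{0<..<y}.
        ennreal (p * (y - x) powr (p - 1) * x powr (\<alpha> - 1) * g y powr p) \<partial>lborel)"
      by (rule nn_integral_cong) (simp add: H_def indicator_def)
    thus ?thesis using True g0 by (simp add: nn_integral_Beta_kernel[OF True p a])
  next
    case False
    hence "H x y = 0" for x by (auto simp: H_def)
    thus ?thesis using False by simp
  qed
  have "(\<integral>\<^sup>+ x\<in>{0<..}. power_tail g p x * ennreal (x powr \<alpha> / x) \<partial>lborel)
      = (\<integral>\<^sup>+ y. (\<integral>\<^sup>+ x. H x y \<partial>lborel) \<partial>lborel)"
    by (simp add: inner_y Tonelli)
  also have "\<dots> = ennreal (p * Beta p \<alpha>) * hardy_rhs g p \<alpha>"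
    unfolding inner_x hardy_rhs_def by (rule nn_integral_cmult) (use gm in measurable)
  finally show ?thesis .
qed

lemma hardy_lhs_cong:
  assumes "\<And>y. y > 0 \<Longrightarrow> f y = g y"
  shows "hardy_lhs f p \<alpha> = hardy_lhs g p \<alpha>"
proof -
  have "(\<integral>\<^sup>+ y\<in>{x<..}. ennreal (f y) \<partial>lborel) = (\<integral>\<^sup>+ y\<in>{x<..}. ennreal (g y) \<partial>lborel)" if "x > 0" for x
    using that by (intro nn_integral_cong) (auto simp: assms indicator_def)
  thus ?thesis unfolding hardy_lhs_def by (intro nn_integral_cong) (auto simp: indicator_def)
qed

lemma hardy_rhs_cong:
  assumes "\<And>y. y > 0 \<Longrightarrow> f y = g y"
  shows "hardy_rhs f p \<alpha> = hardy_rhs g p \<alpha>"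
  unfolding hardy_rhs_def by (intro nn_integral_cong) (auto simp: assms indicator_def)

lemma antimono_from_admissible: "admissible f \<Longrightarrow> 0 < x \<Longrightarrow> 0 < p \<Longrightarrow> antimono_from f x p"
  unfolding admissible_def antimono_from_def by auto

lemma admissible_obtain_borel:
  assumes f: "admissible f"
  obtains g where "admissible g" "g \<in> borel_measurable lborel" "\<And>y. y > 0 \<Longrightarrow> g y = f y"
proof
  define g where "g y = indicator {0<..} y * f y" for y :: real
  show g_meas: "g \<in> borel_measurable lborel"
    using f by (simp add: g_def[abs_def] admissible_def set_borel_measurable_def)
  show "g y = f y" if "y > 0" for y using that by (simp add: g_def)
  have "(\<lambda>y. indicator {0<..} y * g y) = g" by (auto simp: g_def indicator_def)
  thus "admissible g"
    using f g_meas by (auto simp: admissible_def set_borel_measurable_def g_def)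
qed

theorem hardy_inequality_ge:
  assumes f: "admissible f" and p1: "p \<ge> 1" and a: "\<alpha> > 0"
  shows "ennreal (p * Beta p \<alpha>) * hardy_rhs f p \<alpha> \<le> hardy_lhs f p \<alpha>"
proof -
  obtain g where g: "admissible g" "g \<in> borel_measurable lborel" "\<And>y. y > 0 \<Longrightarrow> g y = f y"
    using admissible_obtain_borel[OF f] by blast
  have p: "p > 0" using p1 by simp
  have "ennreal (p * Beta p \<alpha>) * hardy_rhs g p \<alpha>
      = (\<integral>\<^sup>+ x\<in>{0<..}. power_tail g p x * ennreal (x powr \<alpha> / x) \<partial>lborel)"
    using g by (intro nn_integral_power_tail[symmetric] p a) (auto simp: admissible_def)
  also have "\<dots> \<le> hardy_lhs g p \<alpha>"
    unfolding hardy_lhs_def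
    by (intro nn_integral_mono)
       (auto split: split_indicator intro!: mult_right_mono antimono_from.power_tail_le_ennpow
          antimono_from_admissible g p p1)
  finally show ?thesis using hardy_lhs_cong[OF g(3)] hardy_rhs_cong[OF g(3)] by simp
qed

theorem hardy_inequality_le:
  assumes f: "admissible f" and p: "p > 0" and p1: "p \<le> 1" and a: "\<alpha> > 0"
  shows "hardy_lhs f p \<alpha> \<le> ennreal (p * Beta p \<alpha>) * hardy_rhs f p \<alpha>"
proof -
  obtain g where g: "admissible g" "g \<in> borel_measurable lborel" "\<And>y. y > 0 \<Longrightarrow> g y = f y"
    using admissible_obtain_borel[OF f] by blast
  have "hardy_lhs g p \<alpha> \<le> (\<integral>\<^sup>+ x\<in>{0<..}. power_tail g p x * ennreal (x powr \<alpha> / x) \<partial>lborel)"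
    unfolding hardy_lhs_def
    by (intro nn_integral_mono)
       (auto split: split_indicator intro!: mult_right_mono antimono_from.ennpow_le_power_tail
          antimono_from_admissible g p p1)
  also have "\<dots> = ennreal (p * Beta p \<alpha>) * hardy_rhs g p \<alpha>"
    using g by (intro nn_integral_power_tail p a) (auto simp: admissible_def)
  finally show ?thesis using hardy_lhs_cong[OF g(3)] hardy_rhs_cong[OF g(3)] by simp
qed

lemma admissible_indicator_atMost: "admissible (indicator {..a} :: real \<Rightarrow> real)"
  unfolding admissible_def set_borel_measurable_def by (auto simp: indicator_def)

lemma ennpow_tail_indicator_eq_power_tail:
  assumes x: "x > 0" and p: "p > 0"
  shows "ennpow (\<integral>\<^sup>+ y\<in>{x<..}. ennreal (indicator {..1} y) \<partial>lborel) p
    = power_tail (indicator {..1}) p x"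
proof (cases "x < 1")
  case True
  have "(\<integral>\<^sup>+ y\<in>{x<..}. ennreal (indicator {..1} y) \<partial>lborel) = (\<integral>\<^sup>+ y. indicator {x<..1} y \<partial>lborel)"
    by (rule nn_integral_cong) (auto simp: indicator_def)
  also have "\<dots> = ennreal (1 - x)" using True by simp
  finally have tail: "(\<integral>\<^sup>+ y\<in>{x<..}. ennreal (indicator {..1} y) \<partial>lborel) = ennreal (1 - x)" .
  have "power_tail (indicator {..1}) p x
      = (\<integral>\<^sup>+ y\<in>{x<..<1}. ennreal (p * (y - x) powr (p - 1)) \<partial>lborel)"
    unfolding power_tail_def
    by (rule nn_integral_cong_AE)
       (use AE_lborel_singleton[of 1] in \<open>eventually_elim, use p in \<open>auto simp: indicator_def\<close>\<close>)
  also have "\<dots> = ennreal ((1 - x) powr p)"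
    by (rule nn_integral_has_integral_lebesgue')
       (use has_integral_powr_shifted[OF p, of x 1] True p in \<open>auto simp: has_integral_Icc_iff_Ioo[symmetric]\<close>)
  finally show ?thesis using tail True by (simp add: ennpow_def)
next
  case False
  have "(\<integral>\<^sup>+ y\<in>{x<..}. ennreal (indicator {..1} y) \<partial>lborel) = 0"
    "power_tail (indicator {..1}) p x = 0"
    using False p unfolding power_tail_def
    by (auto simp: nn_integral_0_iff_AE indicator_def)
  thus ?thesis using p by (simp add: ennpow_def)
qed

lemma hardy_rhs_indicator:
  assumes p: "p > 0" and a: "\<alpha> > 0"
  shows "hardy_rhs (indicator {..1}) p \<alpha> = ennreal (1 / (p + \<alpha>))"
proof -
  have "hardy_rhs (indicator {..1}) p \<alpha> = (\<integral>\<^sup>+ y\<in>{0<..<1}. ennreal (y powr (p + \<alpha> - 1)) \<partial>lborel)"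
    unfolding hardy_rhs_def
  proof (rule nn_integral_cong_AE)
    show "AE y in lborel. ennreal ((y * indicator {..1} y) powr p * (y powr \<alpha> / y)) * indicator {0<..} y
        = ennreal (y powr (p + \<alpha> - 1)) * indicator {0<..<1} y"
      using AE_lborel_singleton[of 1]
    proof eventually_elim
      fix y :: real assume "y \<noteq> 1"
      have "y powr p * (y powr \<alpha> / y) = y powr (p + \<alpha> - 1)" if "y > 0"
        using that by (simp add: powr_add powr_diff)
      thus "ennreal ((y * indicator {..1} y) powr p * (y powr \<alpha> / y)) * indicator {0<..} y
          = ennreal (y powr (p + \<alpha> - 1)) * indicator {0<..<1} y"
        using \<open>y \<noteq> 1\<close> p by (auto simp: indicator_def)
    qed
  qed
  also have "\<dots> = ennreal (1 / (p + \<alpha>))"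
  proof (rule nn_integral_has_integral_lebesgue')
    have "((\<lambda>y. y powr (p + \<alpha> - 1)) has_integral (1 powr (p + \<alpha> - 1 + 1) / (p + \<alpha> - 1 + 1))) {0..1}"
      by (rule has_integral_powr_from_0) (use p a in auto)
    thus "((\<lambda>y. y powr (p + \<alpha> - 1)) has_integral 1 / (p + \<alpha>)) {0<..<1}"
      by (simp add: has_integral_Icc_iff_Ioo[symmetric])
  qed auto
  finally show ?thesis .
qed

lemma hardy_lhs_indicator:
  assumes p: "p > 0" and a: "\<alpha> > 0"
  shows "hardy_lhs (indicator {..1}) p \<alpha> = ennreal (p * Beta p \<alpha>) * hardy_rhs (indicator {..1}) p \<alpha>"
proof -
  have "hardy_lhs (indicator {..1}) p \<alpha>
      = (\<integral>\<^sup>+ x\<in>{0<..}. power_tail (indicator {..1}) p x * ennreal (x powr \<alpha> / x) \<partial>lborel)"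
    unfolding hardy_lhs_def
    by (intro nn_integral_cong) (simp add: ennpow_tail_indicator_eq_power_tail[OF _ p] split: split_indicator)
  also have "\<dots> = ennreal (p * Beta p \<alpha>) * hardy_rhs (indicator {..1}) p \<alpha>"
    by (rule nn_integral_power_tail[OF _ _ p a]) auto
  finally show ?thesis .
qed

theorem mainTheorem9:
  fixes p \<alpha> :: real
  assumes "p > 0" and "\<alpha> > 0"
  shows "(p \<ge> 1 \<longrightarrow>
           (\<forall>f. admissible f \<longrightarrow>
              hardy_lhs f p \<alpha> \<ge> ennreal (p * Beta p \<alpha>) * hardy_rhs f p \<alpha>)
         \<and> (\<forall>C::real. C > p * Beta p \<alpha> \<longrightarrow>
              (\<exists>f. admissible f \<and> \<not> (hardy_lhs f p \<alpha> \<ge> ennreal C * hardy_rhs f p \<alpha>))))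
       \<and> (p \<le> 1 \<longrightarrow>
           (\<forall>f. admissible f \<longrightarrow>
              hardy_lhs f p \<alpha> \<le> ennreal (p * Beta p \<alpha>) * hardy_rhs f p \<alpha>)
         \<and> (\<forall>C::real. C < p * Beta p \<alpha> \<longrightarrow>
              (\<exists>f. admissible f \<and> \<not> (hardy_lhs f p \<alpha> \<le> ennreal C * hardy_rhs f p \<alpha>))))"
proof -
  have p: "p > 0" and a: "\<alpha> > 0" using assms by auto
  define \<phi> :: "real \<Rightarrow> real" where "\<phi> = indicator {..1}"
  define r where "r = 1 / (p + \<alpha>)"
  have r: "r > 0" and pB: "p * Beta p \<alpha> > 0"
    using p a by (simp_all add: r_def Beta_def Gamma_real_pos)
  have rhs: "ennreal C * hardy_rhs \<phi> p \<alpha> = ennreal (C * r)" for C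
    using ennreal_mult''[of r C] r unfolding \<phi>_def hardy_rhs_indicator[OF p a] r_def[symmetric] by simp
  have lhs: "hardy_lhs \<phi> p \<alpha> = ennreal (p * Beta p \<alpha> * r)"
    using rhs[of "p * Beta p \<alpha>"] hardy_lhs_indicator[OF p a] by (simp add: \<phi>_def)
  have "\<not> hardy_lhs \<phi> p \<alpha> \<ge> ennreal C * hardy_rhs \<phi> p \<alpha>" if "C > p * Beta p \<alpha>" for C
    using that r pB by (simp add: lhs rhs not_le ennreal_less_iff)
  moreover have "\<not> hardy_lhs \<phi> p \<alpha> \<le> ennreal C * hardy_rhs \<phi> p \<alpha>" if "C < p * Beta p \<alpha>" for C
    using that r pB by (auto simp: lhs rhs not_le intro!: ennreal_lessI mult_strict_right_mono)
  moreover have "admissible \<phi>" by (simp add: \<phi>_def admissible_indicator_atMost)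
  ultimately show ?thesis using hardy_inequality_ge[OF _ _ a] hardy_inequality_le[OF _ p _ a] by blast
qed

end
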